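(* Let $\mathcal T$ be a mesh of $\Omega$ as described in the context, with degrees $\mathbf p$. Then $\mathcal T$ is abstractly analysis-suitable (AAS) if and only if $\mathcal T$ is strongly dual-compatible (SDC).
   Context: Fix an integer $d\ge 2$, integers $N_1,\dots,N_d\ge 1$, polynomial degrees $\mathbf p=(p_1,\dots,p_d)\in\mathbb N^d$, and put $q_k=\lfloor (p_k+1)/2\rfloor$. Let $\Omega=\prod_{k=1}^d(0,N_k)$ and let $\mathrm{AR}=\prod_{k=1}^d[q_k,N_k-q_k]$ be the active region. A mesh $\mathcal T$ is a finite family of pairwise disjoint sets $E=E_1\times\cdots\times E_d$ (entities) whose union is $\overline\Omega$, where each $E_k$ is either a singleton $\{n\}$ with $n\in\{0,\dots,N_k\}$ or an open interval $(a,b)$ with integers $0\le a<b\le N_k$; entities all of whose components are open intervals are cells. Only meshes arising as follows are considered: start from a tensor-product mesh given by integer grids $0=g^k_0<\dots<g^k_{M_k}=N_k$ (entities: all products of grid points $\{g^k_r\}$ and open grid intervals $(g^k_r,g^k_{r+1})$), each grid containing $0,\dots,q_k$ and $N_k-q_k,\dots,N_k$, and apply finitely many subdivision steps. A subdivision step $\mathrm{subdiv}(\mathcal T,Q,j)$, for a cell $Q\subset\mathrm{AR}$ and direction $j$ such that $m=\frac12(\inf Q_j+\sup Q_j)$ is an integer, is: let $D=\overline Q$; for every $\ell\neq j$, if $\min D_\ell=q_\ell$ replace $D_\ell$ by $D_\ell\cup[0,q_\ell]$, and if $\max D_\ell=N_\ell-q_\ell$ replace $D_\ell$ by $D_\ell\cup[N_\ell-q_\ell,N_\ell]$;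 then replace every entity $E\subset D$ with $E_j=Q_j$ by the three entities obtained from $E$ by replacing its $j$-th component by $(\inf Q_j,m)$, $\{m\}$, $(m,\sup Q_j)$ respectively. For a product set $E$, a direction $j$ and an integer $n$, $P_{j,n}(E)$ is $E$ with its $j$-th component replaced by $\{n\}$. The slice is $S_j(n)=\{x\in\overline\Omega: x_j=n\}$. The $j$-orthogonal skeleton is the closed set $\mathrm{Sk}_j=\bigcup_{Q\text{ cell}}\{x\in\overline Q: x_j\in\{\inf Q_j,\sup Q_j\}\}$. Anchors: let $\kappa=\{\ell: p_\ell\text{ odd}\}$. For a cell $Q$ consider the sets $A=A_1\times\dots\times A_d$ with $A_\ell=\{n_\ell\}$, $n_\ell\in\{\inf Q_\ell,\sup Q_\ell\}$, for $\ell\in\kappa$ and $A_\ell=Q_\ell$ for $\ell\notin\kappa$; the set $\mathcal A$ of anchors consists of all such sets (over all cells) that are contained in $\mathrm{AR}$. For a product set $E$ and direction $j$, the global knot vector $\Xi^j_E$ is the increasing sequence of all integers $n$ with $P_{j,n}(E)\subseteq \mathrm{Sk}_j$. For an anchor $A$, the local knot vector $v^j_A=(\ell_0,\dots,\ell_{p_j+1})$ consists of $p_j+2$ consecutive entries of $\Xi^j_A$ with $\ell_{\lfloor (p_j+1)/2\rfloor}=\inf A_j$. Knot vectors are ordered lists; "$n\in v$" means $n$ is an entry of $v$; $\mathrm{conv}\,v$ is the closed interval from the first to the last entry. The index support of the T-spline $B_A$ of $A$ is $\mathrm{supp}_\Omega B_A=\prod_{k=1}^d\mathrm{conv}\, v^k_A$.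 Abstract T-junction extensions: for $j\in\{1,\dots,d\}$, $n\in\{0,\dots,N_j\}$, $\mathrm{ATJ}_j(n)=S_j(n)\cap\bigcup_{A\in\mathcal A,\, n\in\Xi^j_A}\mathrm{supp}_\Omega B_A\cap\bigcup_{A\in\mathcal A,\, n\notin\Xi^j_A}\mathrm{supp}_\Omega B_A$. The mesh is AAS if $\mathrm{ATJ}_i(n)\cap\mathrm{ATJ}_j(m)=\emptyset$ for all $i\ne j$ and all $n\in\{0,\dots,N_i\}$, $m\in\{0,\dots,N_j\}$. Overlap: two non-decreasing finite sequences $\Xi^{(1)}=(\xi^{(1)}_1,\dots,\xi^{(1)}_{n_1})$, $\Xi^{(2)}=(\xi^{(2)}_1,\dots,\xi^{(2)}_{n_2})$ overlap, written $\Xi^{(1)}\bowtie\Xi^{(2)}$, if there is a non-decreasing sequence $(\xi_1,\dots,\xi_n)$ with $n\ge\max(n_1,n_2)$ and integers $k^{(1)},k^{(2)}\ge 0$ with $\xi^{(1)}_r=\xi_{r+k^{(1)}}$ for $r=1,\dots,n_1$ and $\xi^{(2)}_r=\xi_{r+k^{(2)}}$ for $r=1,\dots,n_2$. The mesh is SDC if for any two distinct anchors $A^{(1)}\ne A^{(2)}$, either $\mathrm{supp}_\Omega B_{A^{(1)}}\cap\mathrm{supp}_\Omega B_{A^{(2)}}=\emptyset$ or $v^k_{A^{(1)}}\bowtie v^k_{A^{(2)}}$ holds for at least $d-1$ directions $k$. *)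

theory Defs
  imports "HOL-Analysis.Analysis"
begin

text \<open>Directions are indexed 0..d-1.  Points of R^d are functions nat => real
  that vanish outside {0..<d}.  Entities (product sets) are described by
  descriptors: one component per direction, either a singleton or an open
  interval with integer end points; components with index >= d are Pt 0.\<close>

datatype comp = Pt int | Iv int int

fun comp_set :: "comp \<Rightarrow> real set" where
  "comp_set (Pt n) = {of_int n}"
| "comp_set (Iv a b) = {of_int a<..<of_int b}"

fun lo :: "comp \<Rightarrow> int" where
  "lo (Pt n) = n"
| "lo (Iv a b) = a"

fun hi :: "comp \<Rightarrow> int" where
  "hi (Pt n) = n"
| "hi (Iv a b) = b"

type_synonym ent = "nat \<Rightarrow> comp"

definition points :: "nat \<Rightarrow> (nat \<Rightarrow> real) set" where
  "points d = {x. \<forall>k\<ge>d. x k = 0}"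

definition ent_set :: "nat \<Rightarrow> ent \<Rightarrow> (nat \<Rightarrow> real) set" where
  "ent_set d E = {x \<in> points d. \<forall>k<d. x k \<in> comp_set (E k)}"

definition ent_closure :: "nat \<Rightarrow> ent \<Rightarrow> (nat \<Rightarrow> real) set" where
  "ent_closure d E = {x \<in> points d. \<forall>k<d. of_int (lo (E k)) \<le> x k \<and> x k \<le> of_int (hi (E k))}"

definition is_cell :: "nat \<Rightarrow> ent \<Rightarrow> bool" where
  "is_cell d E \<longleftrightarrow> (\<forall>k<d. \<exists>a b. E k = Iv a b)"

definition qq :: "(nat \<Rightarrow> nat) \<Rightarrow> nat \<Rightarrow> int" where
  "qq p k = int ((p k + 1) div 2)"

definition Omega_bar :: "nat \<Rightarrow> (nat \<Rightarrow> int) \<Rightarrow> (nat \<Rightarrow> real) set" where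
  "Omega_bar d N = {x \<in> points d. \<forall>k<d. 0 \<le> x k \<and> x k \<le> of_int (N k)}"

definition AR :: "nat \<Rightarrow> (nat \<Rightarrow> int) \<Rightarrow> (nat \<Rightarrow> nat) \<Rightarrow> (nat \<Rightarrow> real) set" where
  "AR d N p = {x \<in> points d. \<forall>k<d. of_int (qq p k) \<le> x k \<and> x k \<le> of_int (N k - qq p k)}"

definition grid_comp :: "int set \<Rightarrow> comp \<Rightarrow> bool" where
  "grid_comp G c \<longleftrightarrow> (\<exists>g\<in>G. c = Pt g) \<or>
     (\<exists>a\<in>G. \<exists>b\<in>G. a < b \<and> (\<forall>g\<in>G. \<not> (a < g \<and> g < b)) \<and> c = Iv a b)"

definition valid_grid :: "int \<Rightarrow> int \<Rightarrow> int set \<Rightarrow> bool" where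
  "valid_grid Nk qk G \<longleftrightarrow> G \<subseteq> {0..Nk} \<and> {0..qk} \<subseteq> G \<and> {Nk - qk..Nk} \<subseteq> G"

definition tp_mesh :: "nat \<Rightarrow> (nat \<Rightarrow> int set) \<Rightarrow> ent set" where
  "tp_mesh d G = {E. (\<forall>k<d. grid_comp (G k) (E k)) \<and> (\<forall>k\<ge>d. E k = Pt 0)}"

definition D_lo :: "(nat \<Rightarrow> nat) \<Rightarrow> ent \<Rightarrow> nat \<Rightarrow> nat \<Rightarrow> int" where
  "D_lo p Q j l = (if l \<noteq> j \<and> lo (Q l) = qq p l then 0 else lo (Q l))"

definition D_hi :: "(nat \<Rightarrow> int) \<Rightarrow> (nat \<Rightarrow> nat) \<Rightarrow> ent \<Rightarrow> nat \<Rightarrow> nat \<Rightarrow> int" where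
  "D_hi N p Q j l = (if l \<noteq> j \<and> hi (Q l) = N l - qq p l then N l else hi (Q l))"

definition D_set :: "nat \<Rightarrow> (nat \<Rightarrow> int) \<Rightarrow> (nat \<Rightarrow> nat) \<Rightarrow> ent \<Rightarrow> nat \<Rightarrow> (nat \<Rightarrow> real) set" where
  "D_set d N p Q j = {x \<in> points d. \<forall>l<d. of_int (D_lo p Q j l) \<le> x l \<and> x l \<le> of_int (D_hi N p Q j l)}"

definition subdiv :: "nat \<Rightarrow> (nat \<Rightarrow> int) \<Rightarrow> (nat \<Rightarrow> nat) \<Rightarrow> ent set \<Rightarrow> ent \<Rightarrow> nat \<Rightarrow> ent set" where
  "subdiv d N p T Q j =
     (let a = lo (Q j); b = hi (Q j); m = (a + b) div 2;
          aff = {E \<in> T. ent_set d E \<subseteq> D_set d N p Q j \<and> E j = Q j}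
      in (T - aff) \<union> (\<lambda>E. E(j := Iv a m)) ` aff \<union> (\<lambda>E. E(j := Pt m)) ` aff
           \<union> (\<lambda>E. E(j := Iv m b)) ` aff)"

inductive_set meshes :: "nat \<Rightarrow> (nat \<Rightarrow> int) \<Rightarrow> (nat \<Rightarrow> nat) \<Rightarrow> ent set set"
  for d N p where
  tp: "(\<forall>k<d. valid_grid (N k) (qq p k) (G k)) \<Longrightarrow> tp_mesh d G \<in> meshes d N p"
| step: "T \<in> meshes d N p \<Longrightarrow> Q \<in> T \<Longrightarrow> is_cell d Q \<Longrightarrow> ent_set d Q \<subseteq> AR d N p \<Longrightarrow>
         j < d \<Longrightarrow> even (lo (Q j) + hi (Q j)) \<Longrightarrow> subdiv d N p T Q j \<in> meshes d N p"

definition slice :: "nat \<Rightarrow> (nat \<Rightarrow> int) \<Rightarrow> nat \<Rightarrow> int \<Rightarrow> (nat \<Rightarrow> real) set" where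
  "slice d N j n = {x \<in> Omega_bar d N. x j = of_int n}"

definition skel :: "nat \<Rightarrow> ent set \<Rightarrow> nat \<Rightarrow> (nat \<Rightarrow> real) set" where
  "skel d T j = (\<Union>Q\<in>{Q \<in> T. is_cell d Q}.
      {x \<in> ent_closure d Q. x j \<in> {of_int (lo (Q j)), of_int (hi (Q j))}})"

definition anchors :: "nat \<Rightarrow> (nat \<Rightarrow> int) \<Rightarrow> (nat \<Rightarrow> nat) \<Rightarrow> ent set \<Rightarrow> ent set" where
  "anchors d N p T = {A. \<exists>Q\<in>T. is_cell d Q \<and>
      (\<forall>k. k < d \<and> odd (p k) \<longrightarrow> A k = Pt (lo (Q k)) \<or> A k = Pt (hi (Q k))) \<and>
      (\<forall>k. \<not> (k < d \<and> odd (p k)) \<longrightarrow> A k = Q k) \<and>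
      ent_set d A \<subseteq> AR d N p}"

text \<open>global knot vector, as the set of its entries (it is the increasing enumeration)\<close>
definition gkv :: "nat \<Rightarrow> ent set \<Rightarrow> nat \<Rightarrow> ent \<Rightarrow> int set" where
  "gkv d T j E = {n. ent_set d (E(j := Pt n)) \<subseteq> skel d T j}"

definition is_lkv :: "int set \<Rightarrow> nat \<Rightarrow> nat \<Rightarrow> int \<Rightarrow> int list \<Rightarrow> bool" where
  "is_lkv K pj qj a v \<longleftrightarrow> length v = pj + 2 \<and> sorted_wrt (<) v \<and> set v \<subseteq> K \<and>
     (\<forall>i. i + 1 < length v \<longrightarrow> \<not> (\<exists>n\<in>K. v ! i < n \<and> n < v ! (i + 1))) \<and> v ! qj = a"

definition lkv :: "nat \<Rightarrow> (nat \<Rightarrow> nat) \<Rightarrow> ent set \<Rightarrow> nat \<Rightarrow> ent \<Rightarrow> int list" where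
  "lkv d p T j A = (THE v. is_lkv (gkv d T j A) (p j) ((p j + 1) div 2) (lo (A j)) v)"

definition supp :: "nat \<Rightarrow> (nat \<Rightarrow> nat) \<Rightarrow> ent set \<Rightarrow> ent \<Rightarrow> (nat \<Rightarrow> real) set" where
  "supp d p T A = {x \<in> points d. \<forall>k<d.
      of_int (hd (lkv d p T k A)) \<le> x k \<and> x k \<le> of_int (last (lkv d p T k A))}"

definition ATJ :: "nat \<Rightarrow> (nat \<Rightarrow> int) \<Rightarrow> (nat \<Rightarrow> nat) \<Rightarrow> ent set \<Rightarrow> nat \<Rightarrow> int \<Rightarrow> (nat \<Rightarrow> real) set" where
  "ATJ d N p T j n = slice d N j n
     \<inter> (\<Union>A\<in>{A \<in> anchors d N p T. n \<in> gkv d T j A}. supp d p T A)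
     \<inter> (\<Union>A\<in>{A \<in> anchors d N p T. n \<notin> gkv d T j A}. supp d p T A)"

definition AAS :: "nat \<Rightarrow> (nat \<Rightarrow> int) \<Rightarrow> (nat \<Rightarrow> nat) \<Rightarrow> ent set \<Rightarrow> bool" where
  "AAS d N p T \<longleftrightarrow> (\<forall>i<d. \<forall>j<d. i \<noteq> j \<longrightarrow>
      (\<forall>n\<in>{0..N i}. \<forall>m\<in>{0..N j}. ATJ d N p T i n \<inter> ATJ d N p T j m = {}))"

definition overlap :: "int list \<Rightarrow> int list \<Rightarrow> bool" where
  "overlap s1 s2 \<longleftrightarrow> (\<exists>xs k1 k2. sorted xs \<and> length xs \<ge> max (length s1) (length s2) \<and>
      (\<forall>r<length s1. r + k1 < length xs \<and> s1 ! r = xs ! (r + k1)) \<and>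
      (\<forall>r<length s2. r + k2 < length xs \<and> s2 ! r = xs ! (r + k2)))"

definition SDC :: "nat \<Rightarrow> (nat \<Rightarrow> int) \<Rightarrow> (nat \<Rightarrow> nat) \<Rightarrow> ent set \<Rightarrow> bool" where
  "SDC d N p T \<longleftrightarrow> (\<forall>A1\<in>anchors d N p T. \<forall>A2\<in>anchors d N p T. A1 \<noteq> A2 \<longrightarrow>
      supp d p T A1 \<inter> supp d p T A2 = {} \<or>
      card {k. k < d \<and> overlap (lkv d p T k A1) (lkv d p T k A2)} \<ge> d - 1)"

end

theory Submission
  imports Defs "HOL-Library.Sublist"
begin

(* The local knot vector of an anchor in direction k is the window of p_k + 2 consecutive entries
   of its global knot vector around the anchor; it is well defined because every global knot
   vector contains the boundary knots 0..q_k and N_k - q_k..N_k, whose slices lie in the skeleton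
   of every mesh. Two strictly increasing lists overlap iff they contain the same integers on the
   intersection of their ranges, so the local knot vectors of A and B in direction k overlap iff
   the global knot vectors of A and B agree on the intersection of the k-th factors of the two
   supports. If they disagree at such an n, moving a common support point to x_k = n gives a point
   of ATJ_k(n). Hence two anchors with a common support point that fail to overlap in two
   directions i and j produce, moving it in both directions, a point of ATJ_i(n) and ATJ_j(m). Conversely, a point of both comes with anchors A1, A2 disagreeing at n
   and B1, B2 disagreeing at m; SDC forces every pair among them to agree at n or at m, which is
   impossible. *)

section \<open>Sorted lists and overlap\<close>

lemma sorted_filter_le_eq_takeWhile:
  fixes xs :: "'a::linorder list"
  assumes "sorted xs"
  shows "filter (\<lambda>x. x \<le> b) xs = takeWhile (\<lambda>x. x \<le> b) xs"
  using assms
  by (induction xs) (auto simp: filter_empty_conv takeWhile_eq_Nil_iff dest: hd_in_set intro: order.trans)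

lemma sorted_filter_interval_sublist:
  fixes xs :: "'a::linorder list"
  assumes "sorted xs"
  shows "sublist (filter (\<lambda>x. a \<le> x \<and> x \<le> b) xs) xs"
  using assms
proof (induction xs)
  case Nil
  then show ?case by simp
next
  case (Cons x xs)
  consider "x < a" | "a \<le> x" "x \<le> b" | "b < x" by force
  then show ?case
  proof cases
    case 1
    then show ?thesis using Cons by (auto simp: sublist_Cons_right)
  next
    case 2
    with Cons.prems have "filter (\<lambda>x. a \<le> x \<and> x \<le> b) (x # xs) = takeWhile (\<lambda>x. x \<le> b) (x # xs)"
      by (auto simp: sorted_filter_le_eq_takeWhile[symmetric] intro!: filter_cong)
    then show ?thesis by (simp add: takeWhile_is_prefix)
  next
    case 3
    with Cons.prems have "filter (\<lambda>x. a \<le> x \<and> x \<le> b) (x # xs) = []"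
      by (auto simp: filter_empty_conv)
    then show ?thesis by simp
  qed
qed

lemma sublist_of_strictly_sorted_interval:
  fixes v xs :: "'a::linorder list"
  assumes "sorted_wrt (<) xs" "sorted_wrt (<) v" "set v = {x \<in> set xs. a \<le> x \<and> x \<le> b}"
  shows "sublist v xs"
proof -
  have "v = filter (\<lambda>x. a \<le> x \<and> x \<le> b) xs"
    using assms by (intro sorted_distinct_set_unique) (auto simp: strict_sorted_iff sorted_filter[of id, simplified])
  then show ?thesis
    using sorted_filter_interval_sublist assms(1) strict_sorted_iff by metis
qed

lemma sorted_hd_le_last:
  fixes xs :: "'a::linorder list"
  assumes "sorted xs" "x \<in> set xs"
  shows "hd xs \<le> x \<and> x \<le> last xs"
proof -
  obtain i where "i < length xs" "xs ! i = x"
    using assms(2) by (auto simp: in_set_conv_nth)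
  moreover have "xs \<noteq> []"
    using assms(2) by auto
  ultimately show ?thesis
    using assms(1) sorted_nth_mono[of xs] by (auto simp: hd_conv_nth last_conv_nth)
qed

lemma sublist_iff_shifted_nth:
  "sublist s xs \<longleftrightarrow> (\<exists>k. \<forall>r<length s. r + k < length xs \<and> s ! r = xs ! (r + k))"
proof
  assume "sublist s xs"
  then obtain ps ss where "xs = ps @ s @ ss"
    by (auto simp: sublist_def)
  then show "\<exists>k. \<forall>r<length s. r + k < length xs \<and> s ! r = xs ! (r + k)"
    by (intro exI[of _ "length ps"]) (simp add: nth_append)
next
  assume "\<exists>k. \<forall>r<length s. r + k < length xs \<and> s ! r = xs ! (r + k)"
  then obtain k where k: "\<forall>r<length s. r + k < length xs \<and> s ! r = xs ! (r + k)" ..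
  show "sublist s xs"
  proof (cases "s = []")
    case False
    then have "take (length s) (drop k xs) = s"
      using k[rule_format, of "length s - 1"] k by (intro nth_equalityI) (auto simp: add.commute)
    then have "xs = take k xs @ s @ drop (length s) (drop k xs)"
      by (metis append_take_drop_id)
    then show ?thesis
      unfolding sublist_def by blast
  qed simp
qed

lemma overlap_iff_common_sorted_superlist:
  "overlap s1 s2 \<longleftrightarrow> (\<exists>xs. sorted xs \<and> sublist s1 xs \<and> sublist s2 xs)"
proof
  assume "overlap s1 s2"
  then show "\<exists>xs. sorted xs \<and> sublist s1 xs \<and> sublist s2 xs"
    unfolding overlap_def sublist_iff_shifted_nth by blast
next
  assume "\<exists>xs. sorted xs \<and> sublist s1 xs \<and> sublist s2 xs"
  then obtain xs where xs: "sorted xs" "sublist s1 xs" "sublist s2 xs"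
    by blast
  then have "length xs \<ge> max (length s1) (length s2)"
    using sublist_length_le[OF xs(2)] sublist_length_le[OF xs(3)] by simp
  with xs show "overlap s1 s2"
    unfolding overlap_def sublist_iff_shifted_nth by blast
qed

lemma sorted_sublist_hull_mem:
  fixes xs w :: "'a::linorder list"
  assumes "sorted xs" "sublist w xs" "w \<noteq> []" "n \<in> set xs" "hd w \<le> n" "n \<le> last w"
  shows "n \<in> set w"
proof -
  obtain ps ss where xs: "xs = ps @ w @ ss"
    using assms(2) by (auto simp: sublist_def)
  have "hd w \<in> set w" "last w \<in> set w"
    using assms(3) by auto
  then have "\<forall>y\<in>set ps. y \<le> hd w" "\<forall>y\<in>set ss. last w \<le> y"
    using assms(1) by (auto simp: xs sorted_append)
  then show ?thesis
    using assms(4-6) \<open>hd w \<in> set w\<close> \<open>last w \<in> set w\<close> by (auto simp: xs dest: antisym)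
qed

lemma overlap_iff_agree_on_common_hull:
  assumes "sorted_wrt (<) v" "sorted_wrt (<) w" "v \<noteq> []" "w \<noteq> []"
  shows "overlap v w \<longleftrightarrow>
    (\<forall>n. hd v \<le> n \<and> n \<le> last v \<and> hd w \<le> n \<and> n \<le> last w \<longrightarrow> (n \<in> set v \<longleftrightarrow> n \<in> set w))"
    (is "_ \<longleftrightarrow> ?agree")
proof
  assume "overlap v w"
  then obtain xs where "sorted xs" "sublist v xs" "sublist w xs"
    by (auto simp: overlap_iff_common_sorted_superlist)
  then show ?agree
    using sorted_sublist_hull_mem set_mono_sublist assms(3,4) by (metis subsetD)
next
  assume agree: ?agree
  define xs where "xs = sorted_list_of_set (set v \<union> set w)"
  have xs: "sorted_wrt (<) xs" "set xs = set v \<union> set w"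
    unfolding xs_def by simp_all
  have hull: "hd u \<le> x \<and> x \<le> last u" if "u \<in> {v, w}" "x \<in> set u" for u x
    using that assms(1,2) sorted_hd_le_last strict_sorted_iff by blast
  have interval: "set u = {x \<in> set xs. hd u \<le> x \<and> x \<le> last u}" if u: "u \<in> {v, w}" for u
  proof (intro equalityI subsetI)
    fix x
    assume "x \<in> set u"
    then show "x \<in> {x \<in> set xs. hd u \<le> x \<and> x \<le> last u}"
      using hull u xs(2) by blast
  next
    fix x
    assume "x \<in> {x \<in> set xs. hd u \<le> x \<and> x \<le> last u}"
    then show "x \<in> set u"
      using agree hull[of _ x] u xs(2) by blast
  qed
  have "sublist v xs" "sublist w xs"
    using sublist_of_strictly_sorted_interval[OF xs(1) assms(1) interval]
      sublist_of_strictly_sorted_interval[OF xs(1) assms(2) interval] by simp_all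
  then show "overlap v w"
    using xs(1) by (auto simp: overlap_iff_common_sorted_superlist strict_sorted_iff)
qed

section \<open>Local knot vectors\<close>

lemma is_lkv_unique:
  assumes v: "is_lkv K pj qj a v" and w: "is_lkv K pj qj a w" and qj: "qj < pj + 2"
  shows "v = w"
proof -
  have len: "length v = pj + 2" "length w = pj + 2" and at_qj: "v ! qj = w ! qj"
    using v w by (auto simp: is_lkv_def)
  have gap: "u ! i < u ! (i + 1) \<and> u ! i \<in> K \<and> u ! (i + 1) \<in> K \<and>
      (\<forall>n\<in>K. \<not> (u ! i < n \<and> n < u ! (i + 1)))" if "u \<in> {v, w}" "i + 1 < pj + 2" for u i
    using that v w by (auto simp: is_lkv_def sorted_wrt_nth_less nth_mem subset_iff)
  have up: "v ! (i + 1) = w ! (i + 1)" if "i + 1 < pj + 2" "v ! i = w ! i" for i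
    using gap[of v i] gap[of w i] that by (auto intro: linorder_neqE)
  have down: "v ! i = w ! i" if "i + 1 < pj + 2" "v ! (i + 1) = w ! (i + 1)" for i
    using gap[of v i] gap[of w i] that by (auto intro: linorder_neqE)
  have above: "v ! (qj + t) = w ! (qj + t)" if "qj + t < pj + 2" for t
    using that by (induction t) (use at_qj up in auto)
  have below: "v ! (qj - t) = w ! (qj - t)" if "t \<le> qj" for t
    using that
  proof (induction t)
    case (Suc t)
    then show ?case
      using down[of "qj - Suc t"] qj by (simp add: Suc_diff_Suc)
  qed (use at_qj in simp)
  show ?thesis
  proof (rule nth_equalityI)
    fix i
    assume "i < length v"
    then show "v ! i = w ! i"
      using above[of "i - qj"] below[of "qj - i"] len by (cases "qj \<le> i") auto
  qed (simp add: len)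
qed

lemma strictly_sorted_split_at_nth:
  fixes xs :: "'a::linorder list"
  assumes "sorted_wrt (<) xs" "i < length xs"
  shows "{x \<in> set xs. x < xs ! i} = set (take i xs)" "{x \<in> set xs. xs ! i < x} = set (drop (Suc i) xs)"
proof -
  define ys zs where "ys = take i xs" and "zs = drop (Suc i) xs"
  have xs: "xs = ys @ xs ! i # zs"
    unfolding ys_def zs_def using assms(2) by (rule id_take_nth_drop)
  then have "sorted_wrt (<) (ys @ xs ! i # zs)"
    using assms(1) by simp
  then have "\<forall>y\<in>set ys. y < xs ! i" "\<forall>z\<in>set zs. xs ! i < z"
    by (auto simp: sorted_wrt_append)
  moreover have "set xs = insert (xs ! i) (set ys \<union> set zs)"
    by (subst xs) auto
  ultimately show "{x \<in> set xs. x < xs ! i} = set (take i xs)" "{x \<in> set xs. xs ! i < x} = set (drop (Suc i) xs)"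
    unfolding ys_def[symmetric] zs_def[symmetric] by auto
qed

lemma sorted_nth_less_imp_less:
  fixes xs :: "'a::linorder list"
  assumes "sorted xs" "i < length xs" "xs ! i < xs ! j"
  shows "i < j"
proof (rule ccontr)
  assume "\<not> i < j"
  then have "xs ! j \<le> xs ! i"
    using sorted_nth_mono[OF assms(1)] assms(2) by simp
  then show False
    using assms(3) by simp
qed

lemma is_lkv_exists:
  fixes K :: "int set"
  assumes K: "finite K" "a \<in> K" and below: "qj \<le> card {x \<in> K. x < a}"
    and above: "pj + 1 - qj \<le> card {x \<in> K. a < x}" and qj: "qj \<le> pj + 1"
  shows "\<exists>v. is_lkv K pj qj a v"
proof -
  define Ks where "Ks = sorted_list_of_set K"
  have Ks: "sorted_wrt (<) Ks" "sorted Ks" "distinct Ks" "set Ks = K"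
    using K(1) by (simp_all add: Ks_def)
  obtain idx where idx: "idx < length Ks" "Ks ! idx = a"
    using K(2) Ks(4) by (metis in_set_conv_nth)
  have card: "card {x \<in> K. x < a} = idx" "card {x \<in> K. a < x} = length Ks - Suc idx"
    using strictly_sorted_split_at_nth[OF Ks(1) idx(1)] Ks(3,4) idx
    by (simp_all add: distinct_card)
  define s where "s = idx - qj"
  have window: "s + qj = idx" "s + (pj + 2) \<le> length Ks"
    using below above qj idx(1) card by (simp_all add: s_def)
  define v where "v = take (pj + 2) (drop s Ks)"
  have len: "length v = pj + 2"
    using window by (simp add: v_def)
  have nth: "v ! i = Ks ! (s + i)" if "i < pj + 2" for i
    using that window by (simp add: v_def)
  have "is_lkv K pj qj a v"
    unfolding is_lkv_def
  proof (intro conjI allI impI)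
    show "sorted_wrt (<) v" "set v \<subseteq> K"
      using Ks(1,4) by (auto simp: v_def sorted_wrt_take sorted_wrt_drop dest: in_set_takeD in_set_dropD)
    show "v ! qj = a"
      using nth[of qj] window(1) qj idx(2) by simp
    fix i
    assume i: "i + 1 < length v"
    show "\<not> (\<exists>n\<in>K. v ! i < n \<and> n < v ! (i + 1))"
    proof
      assume "\<exists>n\<in>K. v ! i < n \<and> n < v ! (i + 1)"
      then obtain t where t: "t < length Ks" "v ! i < Ks ! t" "Ks ! t < v ! (i + 1)"
        using Ks(4) by (metis in_set_conv_nth)
      have "s + i < t" "t < s + (i + 1)"
        using sorted_nth_less_imp_less[OF Ks(2), of "s + i" t]
          sorted_nth_less_imp_less[OF Ks(2), of t "s + (i + 1)"]
          t nth[of i] nth[of "i + 1"] i len window by simp_all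
      then show False
        by linarith
    qed
  qed (rule len)
  then show ?thesis ..
qed

lemma is_lkv_mem:
  assumes v: "is_lkv K pj qj a v" and n: "n \<in> K" "hd v \<le> n" "n \<le> last v"
  shows "n \<in> set v"
proof -
  have len: "length v = pj + 2"
    and gap: "\<And>i. i + 1 < length v \<Longrightarrow> \<not> (v ! i < n \<and> n < v ! (i + 1))"
    using v n(1) by (auto simp: is_lkv_def)
  obtain i where i: "i < length v" "v ! i \<le> n"
    and maximal: "\<And>j. j < length v \<Longrightarrow> v ! j \<le> n \<Longrightarrow> j \<le> i"
  proof -
    let ?S = "{i. i < length v \<and> v ! i \<le> n}"
    have "0 \<in> ?S"
      using n(2) len by (cases v) auto
    moreover have fin: "finite ?S"
      by simp
    ultimately have "Max ?S \<in> ?S"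
      using Max_in by blast
    then show thesis
      using Max_ge[OF fin] that[of "Max ?S"] by blast
  qed
  show ?thesis
  proof (cases "i + 1 < length v")
    case True
    then have "\<not> v ! (i + 1) \<le> n"
      using maximal[of "i + 1"] by auto
    then have "n < v ! (i + 1)"
      by simp
    then have "v ! i = n"
      using gap[OF True] i(2) by auto
    then show ?thesis
      using i(1) nth_mem by blast
  next
    case False
    then have "i = length v - 1" "v \<noteq> []"
      using i(1) by auto
    then have "v ! i = last v"
      by (simp add: last_conv_nth)
    then show ?thesis
      using i n(3) by (metis antisym nth_mem)
  qed
qed

lemma is_lkv_the:
  fixes K :: "int set"
  assumes "finite K" "a \<in> K" "qj \<le> card {x \<in> K. x < a}" "pj + 1 - qj \<le> card {x \<in> K. a < x}"
    "qj \<le> pj + 1"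
  shows "is_lkv K pj qj a (THE v. is_lkv K pj qj a v)"
proof -
  obtain v where v: "is_lkv K pj qj a v"
    using is_lkv_exists[OF assms] by blast
  show ?thesis
  proof (rule theI)
    fix w
    assume "is_lkv K pj qj a w"
    then show "w = v"
      using is_lkv_unique[of K pj qj a w v] v assms(5) by simp
  qed (rule v)
qed

section \<open>Meshes and skeleta\<close>

fun comp_within :: "int \<Rightarrow> comp \<Rightarrow> bool" where
  "comp_within M (Pt n) \<longleftrightarrow> 0 \<le> n \<and> n \<le> M"
| "comp_within M (Iv a b) \<longleftrightarrow> 0 \<le> a \<and> a < b \<and> b \<le> M"

lemma midpoint_between:
  fixes a b :: int
  assumes "even (a + b)" "a < b"
  shows "a < (a + b) div 2" "(a + b) div 2 < b"
proof -
  obtain c where "a + b = 2 * c"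
    using assms(1) unfolding dvd_def by blast
  then have "(a + b) div 2 = c"
    by simp
  with \<open>a + b = 2 * c\<close> assms(2) show "a < (a + b) div 2" "(a + b) div 2 < b"
    by linarith+
qed

lemma subdiv_cases:
  assumes "E' \<in> subdiv d N p T Q j"
  obtains "E' \<in> T"
  | E where "E \<in> T" "E j = Q j" "\<forall>l. l \<noteq> j \<longrightarrow> E' l = E l"
      "E' j \<in> {Iv (lo (Q j)) ((lo (Q j) + hi (Q j)) div 2), Pt ((lo (Q j) + hi (Q j)) div 2),
               Iv ((lo (Q j) + hi (Q j)) div 2) (hi (Q j))}"
  using assms unfolding subdiv_def Let_def by auto

lemma meshes_comp_within:
  assumes "T \<in> meshes d N p" "E \<in> T" "k < d"
  shows "comp_within (N k) (E k)"
  using assms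
proof (induction arbitrary: E k rule: meshes.induct)
  case (tp G)
  then have "grid_comp (G k) (E k)" "G k \<subseteq> {0..N k}"
    by (auto simp: tp_mesh_def valid_grid_def)
  then show ?case
    by (fastforce simp: grid_comp_def)
next
  case (step T Q j)
  obtain a b where Qj: "Q j = Iv a b" "0 \<le> a" "a < b" "b \<le> N j"
    using step.IH[OF step.hyps(2,5)] step.hyps(3,5) by (auto simp: is_cell_def)
  then have mid: "a < (a + b) div 2" "(a + b) div 2 < b"
    using midpoint_between step.hyps(6) by simp_all
  show ?case
  proof (cases rule: subdiv_cases[OF step.prems(1)])
    case 1
    then show ?thesis
      using step.IH step.prems(2) by blast
  next
    case (2 E)
    show ?thesis
    proof (cases "k = j")
      case True
      then show ?thesis
        using 2(4) Qj mid by auto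
    next
      case False
      then show ?thesis
        using 2(1,3) step.IH step.prems(2) by simp
    qed
  qed
qed

lemma cell_comp:
  assumes "T \<in> meshes d N p" "Q \<in> T" "is_cell d Q" "k < d"
  shows "Q k = Iv (lo (Q k)) (hi (Q k))" "0 \<le> lo (Q k)" "lo (Q k) < hi (Q k)" "hi (Q k) \<le> N k"
  using meshes_comp_within[OF assms(1,2,4)] assms(3,4) by (auto simp: is_cell_def)

lemma skel_memI:
  assumes "C \<in> T" "is_cell d C" "x \<in> ent_closure d C"
    "x k = of_int (lo (C k)) \<or> x k = of_int (hi (C k))"
  shows "x \<in> skel d T k"
  using assms unfolding skel_def by blast

lemma skel_subset_Omega_bar:
  assumes "T \<in> meshes d N p"
  shows "skel d T k \<subseteq> Omega_bar d N"
proof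
  fix x
  assume "x \<in> skel d T k"
  then obtain C where C: "C \<in> T" "is_cell d C" "x \<in> ent_closure d C"
    unfolding skel_def by blast
  have "0 \<le> x l \<and> x l \<le> of_int (N l)" if "l < d" for l
  proof -
    have "0 \<le> real_of_int (lo (C l))" "real_of_int (hi (C l)) \<le> of_int (N l)"
      using cell_comp[OF assms C(1,2) that] by simp_all
    moreover have "of_int (lo (C l)) \<le> x l" "x l \<le> of_int (hi (C l))"
      using C(3) that unfolding ent_closure_def by auto
    ultimately show ?thesis
      by linarith
  qed
  then show "x \<in> Omega_bar d N"
    using C(3) unfolding ent_closure_def Omega_bar_def by auto
qed

lemma skel_subdiv_mono:
  assumes T: "T \<in> meshes d N p" and Q: "Q \<in> T" "is_cell d Q" and j: "j < d"
    and even: "even (lo (Q j) + hi (Q j))"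
  shows "skel d T k \<subseteq> skel d (subdiv d N p T Q j) k"
proof
  fix x
  assume "x \<in> skel d T k"
  then obtain C where C: "C \<in> T" "is_cell d C" "x \<in> ent_closure d C"
    and face: "x k = of_int (lo (C k)) \<or> x k = of_int (hi (C k))"
    unfolding skel_def by blast
  define a b m where "a = lo (Q j)" and "b = hi (Q j)" and "m = (lo (Q j) + hi (Q j)) div 2"
  have m: "a < m" "m < b"
    using midpoint_between[OF even cell_comp(3)[OF T Q j]] by (simp_all add: a_def b_def m_def)
  let ?S = "subdiv d N p T Q j"
  show "x \<in> skel d ?S k"
  proof (cases "C \<in> ?S")
    case True
    then show ?thesis
      by (rule skel_memI[OF _ C(2,3) face])
  next
    case False
    then have Cj: "C j = Iv a b" and halves: "C(j := Iv a m) \<in> ?S" "C(j := Iv m b) \<in> ?S"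
      using C(1) cell_comp(1)[OF T Q j]
      unfolding subdiv_def Let_def a_def b_def m_def by auto
    have cells: "is_cell d (C(j := Iv a m))" "is_cell d (C(j := Iv m b))"
      using C(2) unfolding is_cell_def by auto
    have "x j = of_int a \<or> x j = of_int b" if "k = j"
      using face Cj that by simp
    then consider "x j \<le> of_int m" "k = j \<longrightarrow> x j = of_int a" | "of_int m \<le> x j" "k = j \<longrightarrow> x j = of_int b"
      using m by force
    then show ?thesis
    proof cases
      case 1
      then have "x \<in> ent_closure d (C(j := Iv a m))"
        using C(3) Cj unfolding ent_closure_def by auto
      then show ?thesis
        using skel_memI[OF halves(1) cells(1)] face 1(2) by (cases "k = j") auto
    next
      case 2
      then have "x \<in> ent_closure d (C(j := Iv m b))"
        using C(3) Cj unfolding ent_closure_def by auto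
      then show ?thesis
        using skel_memI[OF halves(2) cells(2)] face 2(2) by (cases "k = j") auto
    qed
  qed
qed

lemma grid_interval_around:
  fixes y :: real
  assumes G: "finite G" "G \<subseteq> {0..M}" "0 \<in> G" "M \<in> G" "0 < M"
    and y: "0 \<le> y" "y \<le> of_int M"
  obtains a b where "grid_comp G (Iv a b)" "of_int a \<le> y" "y \<le> of_int b"
proof -
  define L where "L = {x \<in> G. of_int x \<le> y \<and> x < M}"
  define a where "a = Max L"
  have "finite L" "0 \<in> L"
    using G y by (simp_all add: L_def)
  then have "a \<in> L" and a_max: "\<And>x. x \<in> L \<Longrightarrow> x \<le> a"
    unfolding a_def using Max_in by auto
  then have a: "a \<in> G" "of_int a \<le> y" "a < M"
    by (simp_all add: L_def)
  define U where "U = {x \<in> G. a < x}"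
  define b where "b = Min U"
  have "finite U" "M \<in> U"
    using G a by (simp_all add: U_def)
  then have "b \<in> U" and b_min: "\<And>x. x \<in> U \<Longrightarrow> b \<le> x"
    unfolding b_def using Min_in by auto
  then have b: "b \<in> G" "a < b"
    by (simp_all add: U_def)
  have "y \<le> of_int b"
  proof (rule ccontr)
    assume "\<not> y \<le> of_int b"
    moreover have "b \<le> M"
      using b(1) G(2) by auto
    ultimately have "b \<in> L"
      using b(1) y(2) by (auto simp: L_def)
    then show False
      using a_max b(2) by fastforce
  qed
  moreover have "grid_comp G (Iv a b)"
    using a(1) b b_min unfolding grid_comp_def U_def by fastforce
  ultimately show thesis
    using a(2) that by blast
qed

lemma grid_slice_subset_skel:
  assumes G: "\<forall>k<d. valid_grid (N k) (qq p k) (G k)" and N: "\<forall>k<d. N k \<ge> 1" and k: "k < d"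
    and n: "n \<in> G k"
  shows "slice d N k n \<subseteq> skel d (tp_mesh d G) k"
proof
  fix x
  assume x: "x \<in> slice d N k n"
  have grid: "finite (G l)" "G l \<subseteq> {0..N l}" "0 \<in> G l" "N l \<in> G l" if "l < d" for l
    using G[rule_format, OF that] unfolding valid_grid_def qq_def
    by (auto intro: finite_subset)
  have "\<exists>a b. grid_comp (G l) (Iv a b) \<and> of_int a \<le> x l \<and> x l \<le> of_int b" if "l < d" for l
  proof -
    have "0 < N l" "0 \<le> x l" "x l \<le> of_int (N l)"
      using N x that by (auto simp: slice_def Omega_bar_def)
    then show ?thesis
      using grid_interval_around[OF grid[OF that]] by blast
  qed
  then obtain a b where ab: "\<And>l. l < d \<Longrightarrow>
      grid_comp (G l) (Iv (a l) (b l)) \<and> of_int (a l) \<le> x l \<and> x l \<le> of_int (b l)"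
    by metis
  define C where "C = (\<lambda>l. if l < d then Iv (a l) (b l) else Pt 0)"
  have "C \<in> tp_mesh d G" "is_cell d C"
    using ab by (auto simp: C_def tp_mesh_def is_cell_def)
  moreover have "x \<in> ent_closure d C"
    using ab x by (auto simp: C_def ent_closure_def slice_def Omega_bar_def)
  moreover have "x k = of_int (lo (C k)) \<or> x k = of_int (hi (C k))"
    using ab[OF k] n x k unfolding grid_comp_def slice_def C_def by force
  ultimately show "x \<in> skel d (tp_mesh d G) k"
    by (rule skel_memI)
qed

lemma boundary_slice_subset_skel:
  assumes T: "T \<in> meshes d N p" and N: "\<forall>k<d. N k \<ge> 1" and k: "k < d"
    and n: "n \<in> {0..qq p k} \<union> {N k - qq p k..N k}"
  shows "slice d N k n \<subseteq> skel d T k"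
  using T
proof (induction rule: meshes.induct)
  case (tp G)
  then have "n \<in> G k"
    using k n unfolding valid_grid_def by blast
  then show ?case
    using grid_slice_subset_skel[OF tp N k] by blast
next
  case (step T Q j)
  then show ?case
    using skel_subdiv_mono by blast
qed

section \<open>Anchors and their knot vectors\<close>

lemma comp_set_subset: "comp_set c \<subseteq> {of_int (lo c)..of_int (hi c)}"
  by (cases c) auto

lemma comp_bounds_of_comp_set:
  assumes "comp_set c \<noteq> {}" "\<forall>y\<in>comp_set c. of_int t \<le> y \<and> y \<le> of_int u"
  shows "t \<le> lo c \<and> hi c \<le> u"
proof (cases c)
  case (Iv a b)
  then have "a < b"
    using assms(1) by auto
  then have "of_int a + 1/2 \<in> comp_set c" "of_int b - 1/2 \<in> comp_set c"
    using Iv by auto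
  then have "of_int t \<le> of_int a + (1/2 :: real)" "of_int b - (1/2 :: real) \<le> of_int u"
    using assms(2) by auto
  then have "t \<le> a" "b \<le> u"
    by linarith+
  then show ?thesis
    using Iv by simp
qed (use assms(2) in auto)

lemma ent_set_coordinate:
  assumes "\<forall>l<d. comp_set (E l) \<noteq> {}" "k < d" "y \<in> comp_set (E k)"
  obtains x where "x \<in> ent_set d E" "x k = y"
proof -
  define x where "x = (\<lambda>l. if l = k then y else if l < d then (SOME z. z \<in> comp_set (E l)) else 0)"
  have "x \<in> ent_set d E"
    using assms some_in_eq unfolding ent_set_def points_def x_def by auto
  then show thesis
    using that by (simp add: x_def)
qed

lemma anchor_cell:
  assumes "T \<in> meshes d N p" "A \<in> anchors d N p T"
  obtains Q where "Q \<in> T" "is_cell d Q" "ent_set d A \<subseteq> AR d N p"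
    "\<And>l. l < d \<Longrightarrow> Q l = Iv (lo (Q l)) (hi (Q l)) \<and> lo (Q l) < hi (Q l)"
    "\<And>l. l < d \<Longrightarrow> odd (p l) \<Longrightarrow> A l = Pt (lo (Q l)) \<or> A l = Pt (hi (Q l))"
    "\<And>l. l < d \<Longrightarrow> even (p l) \<Longrightarrow> A l = Q l"
  using assms(2) cell_comp[OF assms(1)] unfolding anchors_def by blast

lemma anchor_comp:
  assumes T: "T \<in> meshes d N p" and A: "A \<in> anchors d N p T" and l: "l < d"
  shows "comp_set (A l) \<noteq> {}" "qq p l \<le> lo (A l)" "hi (A l) \<le> N l - qq p l"
    "odd (p l) \<Longrightarrow> A l = Pt (lo (A l))" "even (p l) \<Longrightarrow> lo (A l) < hi (A l)"
    "lo (A l) \<le> hi (A l)"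
proof -
  obtain Q where Q: "ent_set d A \<subseteq> AR d N p"
    "\<And>l. l < d \<Longrightarrow> Q l = Iv (lo (Q l)) (hi (Q l)) \<and> lo (Q l) < hi (Q l)"
    "\<And>l. l < d \<Longrightarrow> odd (p l) \<Longrightarrow> A l = Pt (lo (Q l)) \<or> A l = Pt (hi (Q l))"
    "\<And>l. l < d \<Longrightarrow> even (p l) \<Longrightarrow> A l = Q l"
    using anchor_cell[OF T A] by metis
  have nonempty: "comp_set (A l) \<noteq> {}" if "l < d" for l
  proof (cases "odd (p l)")
    case True
    then show ?thesis
      using Q(3)[OF that] by auto
  next
    case False
    then have "A l = Iv (lo (Q l)) (hi (Q l))" "lo (Q l) < hi (Q l)"
      using Q(2,4)[OF that] by auto
    then show ?thesis
      by simp
  qed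
  then show "comp_set (A l) \<noteq> {}"
    using l by blast
  show "odd (p l) \<Longrightarrow> A l = Pt (lo (A l))" "even (p l) \<Longrightarrow> lo (A l) < hi (A l)"
    "lo (A l) \<le> hi (A l)"
    using Q(2-4)[OF l] by (cases "odd (p l)"; force)+
  have "of_int (qq p l) \<le> y \<and> y \<le> of_int (N l - qq p l)" if y: "y \<in> comp_set (A l)" for y
  proof -
    obtain x where "x \<in> ent_set d A" "x l = y"
      using ent_set_coordinate[of d A l y] nonempty l y by blast
    then show ?thesis
      using Q(1) l unfolding AR_def by auto
  qed
  then show "qq p l \<le> lo (A l)" "hi (A l) \<le> N l - qq p l"
    using comp_bounds_of_comp_set nonempty[OF l] by blast+
qed

lemma anchor_face_subset_skel:
  assumes T: "T \<in> meshes d N p" and A: "A \<in> anchors d N p T" and k: "k < d"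
  shows "ent_set d (A(k := Pt (lo (A k)))) \<subseteq> skel d T k"
proof
  fix x
  assume x: "x \<in> ent_set d (A(k := Pt (lo (A k))))"
  obtain Q where Q: "Q \<in> T" "is_cell d Q"
    "\<And>l. l < d \<Longrightarrow> Q l = Iv (lo (Q l)) (hi (Q l)) \<and> lo (Q l) < hi (Q l)"
    "\<And>l. l < d \<Longrightarrow> odd (p l) \<Longrightarrow> A l = Pt (lo (Q l)) \<or> A l = Pt (hi (Q l))"
    "\<And>l. l < d \<Longrightarrow> even (p l) \<Longrightarrow> A l = Q l"
    using anchor_cell[OF T A] by metis
  have face: "lo (A l) = lo (Q l) \<or> lo (A l) = hi (Q l)" if "l < d" for l
    using Q(4,5)[OF that] by (cases "odd (p l)") auto
  have xk: "x k = of_int (lo (A k))"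
    using x k unfolding ent_set_def by auto
  have "of_int (lo (Q l)) \<le> x l \<and> x l \<le> of_int (hi (Q l))" if l: "l < d" for l
  proof (cases "l = k")
    case True
    then show ?thesis
      using xk face[OF l] Q(3)[OF l] by auto
  next
    case False
    then have "x l \<in> comp_set (A l)"
      using x l unfolding ent_set_def by auto
    moreover have "comp_set (A l) \<subseteq> {of_int (lo (Q l))..of_int (hi (Q l))}"
      using Q(3-5)[OF l] comp_set_subset[of "Q l"] by (cases "odd (p l)") auto
    ultimately show ?thesis
      by auto
  qed
  then have "x \<in> ent_closure d Q"
    using x unfolding ent_set_def ent_closure_def by auto
  moreover have "x k = of_int (lo (Q k)) \<or> x k = of_int (hi (Q k))"
    using xk face[OF k] by auto
  ultimately show "x \<in> skel d T k"
    by (rule skel_memI[OF Q(1,2)])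
qed

lemma anchor_slice:
  assumes T: "T \<in> meshes d N p" and A: "A \<in> anchors d N p T" and k: "k < d"
    and n: "0 \<le> n" "n \<le> N k"
  shows "ent_set d (A(k := Pt n)) \<subseteq> slice d N k n"
proof
  fix x
  assume x: "x \<in> ent_set d (A(k := Pt n))"
  have xk: "x k = of_int n"
    using x k unfolding ent_set_def by auto
  have "0 \<le> x l \<and> x l \<le> of_int (N l)" if l: "l < d" for l
  proof (cases "l = k")
    case False
    then have "x l \<in> comp_set (A l)"
      using x l unfolding ent_set_def by auto
    then have "x l \<in> {of_int (lo (A l))..of_int (hi (A l))}"
      using comp_set_subset by blast
    moreover have "0 \<le> qq p l"
      by (simp add: qq_def)
    ultimately show ?thesis
      using anchor_comp(2,3)[OF T A l] by simp
  qed (use xk n in simp)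
  then show "x \<in> slice d N k n"
    using x xk unfolding ent_set_def slice_def Omega_bar_def by auto
qed

lemma anchor_upd_point:
  assumes T: "T \<in> meshes d N p" and A: "A \<in> anchors d N p T" and k: "k < d"
  obtains x where "x \<in> ent_set d (A(k := Pt n))" "x k = of_int n"
proof (rule ent_set_coordinate[of d "A(k := Pt n)" k])
  show "\<forall>l<d. comp_set ((A(k := Pt n)) l) \<noteq> {}"
    using anchor_comp(1)[OF T A] by simp
qed (use k that in auto)

lemma gkv_subset:
  assumes T: "T \<in> meshes d N p" and A: "A \<in> anchors d N p T" and k: "k < d"
  shows "gkv d T k A \<subseteq> {0..N k}"
proof
  fix n
  assume "n \<in> gkv d T k A"
  then have "ent_set d (A(k := Pt n)) \<subseteq> Omega_bar d N"
    using skel_subset_Omega_bar[OF T] unfolding gkv_def by blast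
  moreover obtain x where "x \<in> ent_set d (A(k := Pt n))" "x k = of_int n"
    using anchor_upd_point[OF T A k] .
  ultimately have "x \<in> Omega_bar d N"
    by blast
  then have "0 \<le> x k" "x k \<le> of_int (N k)"
    using k unfolding Omega_bar_def by auto
  with \<open>x k = of_int n\<close> show "n \<in> {0..N k}"
    by simp
qed

lemma boundary_knots_in_gkv:
  assumes T: "T \<in> meshes d N p" and N: "\<forall>k<d. N k \<ge> 1" and A: "A \<in> anchors d N p T" and k: "k < d"
    and n: "n \<in> {0..qq p k} \<union> {N k - qq p k..N k}"
  shows "n \<in> gkv d T k A"
proof -
  have "qq p k \<le> N k - qq p k"
    using anchor_comp(2,3,6)[OF T A k] by linarith
  then have "0 \<le> n" "n \<le> N k"
    using n by (auto simp: qq_def)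
  then have "ent_set d (A(k := Pt n)) \<subseteq> slice d N k n"
    by (rule anchor_slice[OF T A k])
  also have "\<dots> \<subseteq> skel d T k"
    by (rule boundary_slice_subset_skel[OF T N k n])
  finally show ?thesis
    unfolding gkv_def by simp
qed

lemma anchor_knot_room:
  assumes T: "T \<in> meshes d N p" and A: "A \<in> anchors d N p T" and k: "k < d"
  shows "lo (A k) + int (p k + 1 - (p k + 1) div 2) \<le> N k"
proof (cases "odd (p k)")
  case True
  then have "p k + 1 - (p k + 1) div 2 = (p k + 1) div 2" "hi (A k) = lo (A k)"
    using anchor_comp(4)[OF T A k] by (presburger, metis hi.simps(1))
  then show ?thesis
    using anchor_comp(3)[OF T A k] by (simp add: qq_def)
next
  case False
  then have "p k + 1 - (p k + 1) div 2 = (p k + 1) div 2 + 1" "lo (A k) < hi (A k)"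
    using anchor_comp(5)[OF T A k] by (presburger, simp)
  then show ?thesis
    using anchor_comp(3)[OF T A k] by (simp add: qq_def)
qed

lemma lkv_is_lkv:
  assumes T: "T \<in> meshes d N p" and N: "\<forall>k<d. N k \<ge> 1" and A: "A \<in> anchors d N p T" and k: "k < d"
  shows "is_lkv (gkv d T k A) (p k) ((p k + 1) div 2) (lo (A k)) (lkv d p T k A)"
proof -
  define K qj r a where "K = gkv d T k A" and "qj = (p k + 1) div 2" and "r = p k + 1 - qj"
    and "a = lo (A k)"
  have q: "qq p k = int qj"
    by (simp add: qq_def qj_def)
  have "finite K"
    using gkv_subset[OF T A k] finite_subset unfolding K_def by blast
  have "a \<in> K"
    using anchor_face_subset_skel[OF T A k] unfolding K_def a_def gkv_def by simp
  have boundary: "n \<in> K" if "n \<in> {0..int qj} \<union> {N k - int qj..N k}" for n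
    using boundary_knots_in_gkv[OF T N A k] that q unfolding K_def by simp
  have "r \<le> qj + 1"
    unfolding r_def qj_def by presburger
  have "int qj \<le> a"
    using anchor_comp(2)[OF T A k] q unfolding a_def by simp
  have "a + int r \<le> N k"
    using anchor_knot_room[OF T A k] unfolding a_def r_def qj_def .
  have "{0..<int qj} \<subseteq> {x \<in> K. x < a}"
    using boundary \<open>int qj \<le> a\<close> by auto
  then have below: "qj \<le> card {x \<in> K. x < a}"
    using card_mono[OF _ \<open>{0..<int qj} \<subseteq> _\<close>] \<open>finite K\<close> by simp
  have "{N k - int r<..N k} \<subseteq> {x \<in> K. a < x}"
    using boundary \<open>a + int r \<le> N k\<close> \<open>r \<le> qj + 1\<close> by auto
  then have above: "p k + 1 - qj \<le> card {x \<in> K. a < x}"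
    using card_mono[OF _ \<open>{N k - int r<..N k} \<subseteq> _\<close>] \<open>finite K\<close> unfolding r_def by simp
  show ?thesis
    using is_lkv_the[OF \<open>finite K\<close> \<open>a \<in> K\<close> below above] unfolding lkv_def K_def qj_def a_def
    by simp
qed

definition knot_span :: "nat \<Rightarrow> (nat \<Rightarrow> nat) \<Rightarrow> ent set \<Rightarrow> nat \<Rightarrow> ent \<Rightarrow> int set" where
  "knot_span d p T k A = {hd (lkv d p T k A)..last (lkv d p T k A)}"

lemma lkv_strictly_sorted:
  assumes T: "T \<in> meshes d N p" and N: "\<forall>k<d. N k \<ge> 1" and A: "A \<in> anchors d N p T" and k: "k < d"
  shows "lkv d p T k A \<noteq> []" "sorted_wrt (<) (lkv d p T k A)"
  using lkv_is_lkv[OF T N A k] by (auto simp: is_lkv_def)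

lemma set_lkv:
  assumes T: "T \<in> meshes d N p" and N: "\<forall>k<d. N k \<ge> 1" and A: "A \<in> anchors d N p T" and k: "k < d"
  shows "set (lkv d p T k A) = gkv d T k A \<inter> knot_span d p T k A"
proof -
  let ?v = "lkv d p T k A"
  have v: "is_lkv (gkv d T k A) (p k) ((p k + 1) div 2) (lo (A k)) ?v"
    by (rule lkv_is_lkv[OF T N A k])
  then have "set ?v \<subseteq> gkv d T k A"
    by (simp add: is_lkv_def)
  moreover have "hd ?v \<le> n \<and> n \<le> last ?v" if "n \<in> set ?v" for n
    using sorted_hd_le_last[of ?v n] lkv_strictly_sorted(2)[OF T N A k] that
    by (simp add: strict_sorted_iff)
  ultimately show ?thesis
    using is_lkv_mem[OF v] unfolding knot_span_def by auto
qed

lemma lkv_bounds: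
  assumes T: "T \<in> meshes d N p" and N: "\<forall>k<d. N k \<ge> 1" and A: "A \<in> anchors d N p T" and k: "k < d"
  shows "0 \<le> hd (lkv d p T k A)" "last (lkv d p T k A) \<le> N k"
proof -
  have "hd (lkv d p T k A) \<in> set (lkv d p T k A)" "last (lkv d p T k A) \<in> set (lkv d p T k A)"
    using lkv_strictly_sorted(1)[OF T N A k] by simp_all
  then have "hd (lkv d p T k A) \<in> gkv d T k A" "last (lkv d p T k A) \<in> gkv d T k A"
    unfolding set_lkv[OF T N A k] by simp_all
  then show "0 \<le> hd (lkv d p T k A)" "last (lkv d p T k A) \<le> N k"
    using gkv_subset[OF T A k] by auto
qed

lemma overlap_lkv_iff:
  assumes T: "T \<in> meshes d N p" and N: "\<forall>k<d. N k \<ge> 1"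
    and A: "A \<in> anchors d N p T" and B: "B \<in> anchors d N p T" and k: "k < d"
  shows "overlap (lkv d p T k A) (lkv d p T k B) \<longleftrightarrow>
    (\<forall>n \<in> knot_span d p T k A \<inter> knot_span d p T k B. n \<in> gkv d T k A \<longleftrightarrow> n \<in> gkv d T k B)"
proof -
  have "n \<in> set (lkv d p T k A) \<longleftrightarrow> n \<in> gkv d T k A"
    "n \<in> set (lkv d p T k B) \<longleftrightarrow> n \<in> gkv d T k B"
    if "n \<in> knot_span d p T k A \<inter> knot_span d p T k B" for n
    using that set_lkv[OF T N A k] set_lkv[OF T N B k] by blast+
  then show ?thesis
    using overlap_iff_agree_on_common_hull[OF lkv_strictly_sorted(2)[OF T N A k]
      lkv_strictly_sorted(2)[OF T N B k] lkv_strictly_sorted(1)[OF T N A k]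
      lkv_strictly_sorted(1)[OF T N B k]]
    unfolding knot_span_def by auto
qed

lemma supp_knot_span:
  assumes "x \<in> supp d p T A" "k < d" "x k = of_int n"
  shows "n \<in> knot_span d p T k A"
  using assms unfolding supp_def knot_span_def by auto

lemma supp_upd:
  assumes "x \<in> supp d p T A" "k < d" "n \<in> knot_span d p T k A"
  shows "x(k := of_int n) \<in> supp d p T A"
  using assms unfolding supp_def knot_span_def points_def by auto

lemma supp_subset_Omega_bar:
  assumes T: "T \<in> meshes d N p" and N: "\<forall>k<d. N k \<ge> 1" and A: "A \<in> anchors d N p T"
  shows "supp d p T A \<subseteq> Omega_bar d N"
proof
  fix x
  assume x: "x \<in> supp d p T A"
  have "0 \<le> x k \<and> x k \<le> of_int (N k)" if "k < d" for k
  proof -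
    have "0 \<le> real_of_int (hd (lkv d p T k A))" "real_of_int (last (lkv d p T k A)) \<le> of_int (N k)"
      using lkv_bounds[OF T N A that] by simp_all
    moreover have "of_int (hd (lkv d p T k A)) \<le> x k" "x k \<le> of_int (last (lkv d p T k A))"
      using x that unfolding supp_def by auto
    ultimately show ?thesis
      by linarith
  qed
  then show "x \<in> Omega_bar d N"
    using x unfolding supp_def Omega_bar_def by auto
qed

section \<open>Analysis-suitability and dual-compatibility\<close>

lemma card_ge_minus_one_iff:
  "d - 1 \<le> card {k. k < d \<and> P k} \<longleftrightarrow> (\<forall>i<d. \<forall>j<d. i \<noteq> j \<longrightarrow> P i \<or> P j)"
proof -
  let ?Y = "{k. k < d \<and> P k}" and ?X = "{k. k < d \<and> \<not> P k}"
  have "?Y \<union> ?X = {..<d}" "?Y \<inter> ?X = {}"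
    by auto
  then have "card ?Y + card ?X = d"
    using card_Un_disjoint[of ?Y ?X] by simp
  then have "d - 1 \<le> card ?Y \<longleftrightarrow> card ?X \<le> Suc 0"
    by linarith
  also have "\<dots> \<longleftrightarrow> (\<forall>i\<in>?X. \<forall>j\<in>?X. i = j)"
    by (rule card_le_Suc0_iff_eq) simp
  finally show ?thesis
    by blast
qed

lemma SDC_iff_pairwise:
  "SDC d N p T \<longleftrightarrow> (\<forall>A1\<in>anchors d N p T. \<forall>A2\<in>anchors d N p T. A1 \<noteq> A2 \<longrightarrow>
      supp d p T A1 \<inter> supp d p T A2 \<noteq> {} \<longrightarrow> (\<forall>i<d. \<forall>j<d. i \<noteq> j \<longrightarrow>
        overlap (lkv d p T i A1) (lkv d p T i A2) \<or> overlap (lkv d p T j A1) (lkv d p T j A2)))"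
  unfolding SDC_def card_ge_minus_one_iff by blast

lemma mem_ATJ_iff:
  "x \<in> ATJ d N p T j n \<longleftrightarrow> x \<in> slice d N j n \<and>
    (\<exists>A\<in>anchors d N p T. n \<in> gkv d T j A \<and> x \<in> supp d p T A) \<and>
    (\<exists>B\<in>anchors d N p T. n \<notin> gkv d T j B \<and> x \<in> supp d p T B)"
  unfolding ATJ_def by blast

lemma SDC_knots_agree:
  assumes T: "T \<in> meshes d N p" and N: "\<forall>k<d. N k \<ge> 1" and sdc: "SDC d N p T"
    and X: "X \<in> anchors d N p T" "x \<in> supp d p T X" and Y: "Y \<in> anchors d N p T" "x \<in> supp d p T Y"
    and ij: "i < d" "j < d" "i \<noteq> j" and x: "x i = of_int n" "x j = of_int m"
  shows "(n \<in> gkv d T i X \<longleftrightarrow> n \<in> gkv d T i Y) \<or> (m \<in> gkv d T j X \<longleftrightarrow> m \<in> gkv d T j Y)"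
proof (cases "X = Y")
  case False
  then have "overlap (lkv d p T i X) (lkv d p T i Y) \<or> overlap (lkv d p T j X) (lkv d p T j Y)"
    using sdc X Y ij unfolding SDC_iff_pairwise by blast
  moreover have "n \<in> knot_span d p T i X \<inter> knot_span d p T i Y"
    "m \<in> knot_span d p T j X \<inter> knot_span d p T j Y"
    using supp_knot_span X(2) Y(2) ij x by blast+
  ultimately show ?thesis
    using overlap_lkv_iff[OF T N X(1) Y(1) ij(1)] overlap_lkv_iff[OF T N X(1) Y(1) ij(2)] by blast
qed simp

lemma SDC_imp_AAS:
  assumes T: "T \<in> meshes d N p" and N: "\<forall>k<d. N k \<ge> 1" and sdc: "SDC d N p T"
  shows "AAS d N p T"
  unfolding AAS_def
proof (intro allI impI ballI)
  fix i j n m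
  assume ij: "i < d" "j < d" "i \<noteq> j"
  show "ATJ d N p T i n \<inter> ATJ d N p T j m = {}"
  proof (rule ccontr)
    assume "ATJ d N p T i n \<inter> ATJ d N p T j m \<noteq> {}"
    then obtain x where "x \<in> ATJ d N p T i n" "x \<in> ATJ d N p T j m"
      by blast
    then obtain A1 A2 B1 B2 where x: "x i = of_int n" "x j = of_int m"
      and A: "A1 \<in> anchors d N p T" "x \<in> supp d p T A1" "n \<in> gkv d T i A1"
        "A2 \<in> anchors d N p T" "x \<in> supp d p T A2" "n \<notin> gkv d T i A2"
      and B: "B1 \<in> anchors d N p T" "x \<in> supp d p T B1" "m \<in> gkv d T j B1"
        "B2 \<in> anchors d N p T" "x \<in> supp d p T B2" "m \<notin> gkv d T j B2"
      unfolding mem_ATJ_iff slice_def by blast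
    note agree = SDC_knots_agree[OF T N sdc _ _ _ _ ij x]
    show False
      using agree[OF A(1,2) A(4,5)] agree[OF A(1,2) B(1,2)] agree[OF A(1,2) B(4,5)]
        agree[OF A(4,5) B(1,2)] agree[OF A(4,5) B(4,5)] A(3,6) B(3,6)
      by blast
  qed
qed

lemma ATJ_memI:
  assumes "x \<in> Omega_bar d N" "x j = of_int n"
    and "A \<in> anchors d N p T" "x \<in> supp d p T A" "B \<in> anchors d N p T" "x \<in> supp d p T B"
    and "n \<in> gkv d T j A \<longleftrightarrow> n \<notin> gkv d T j B"
  shows "x \<in> ATJ d N p T j n"
  using assms unfolding mem_ATJ_iff slice_def by (cases "n \<in> gkv d T j A") auto

lemma AAS_imp_SDC:
  assumes T: "T \<in> meshes d N p" and N: "\<forall>k<d. N k \<ge> 1" and aas: "AAS d N p T"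
  shows "SDC d N p T"
  unfolding SDC_iff_pairwise
proof (intro ballI impI allI)
  fix A1 A2 i j
  assume A: "A1 \<in> anchors d N p T" "A2 \<in> anchors d N p T"
    and common: "supp d p T A1 \<inter> supp d p T A2 \<noteq> {}" and ij: "i < d" "j < d" "i \<noteq> j"
  show "overlap (lkv d p T i A1) (lkv d p T i A2) \<or> overlap (lkv d p T j A1) (lkv d p T j A2)"
  proof (rule ccontr)
    assume "\<not> ?thesis"
    then obtain n m where n: "n \<in> knot_span d p T i A1 \<inter> knot_span d p T i A2"
        "n \<in> gkv d T i A1 \<longleftrightarrow> n \<notin> gkv d T i A2"
      and m: "m \<in> knot_span d p T j A1 \<inter> knot_span d p T j A2"
        "m \<in> gkv d T j A1 \<longleftrightarrow> m \<notin> gkv d T j A2"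
      using overlap_lkv_iff[OF T N A ij(1)] overlap_lkv_iff[OF T N A ij(2)] by blast
    obtain y where y: "y \<in> supp d p T A1" "y \<in> supp d p T A2"
      using common by blast
    define x where "x = y(i := of_int n, j := of_int m)"
    have x: "x i = of_int n" "x j = of_int m"
      using ij(3) by (simp_all add: x_def)
    have supp: "x \<in> supp d p T A1" "x \<in> supp d p T A2"
      using y n(1) m(1) ij(1,2) unfolding x_def by (blast intro: supp_upd)+
    then have "x \<in> Omega_bar d N"
      using supp_subset_Omega_bar[OF T N A(1)] by blast
    then have "x \<in> ATJ d N p T i n" "x \<in> ATJ d N p T j m"
      using ATJ_memI[OF _ _ A(1) supp(1) A(2) supp(2)] x n(2) m(2) by blast+
    moreover have "n \<in> {0..N i}" "m \<in> {0..N j}"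
      using \<open>x \<in> Omega_bar d N\<close> x ij(1,2) unfolding Omega_bar_def by auto
    ultimately show False
      using aas ij unfolding AAS_def by blast
  qed
qed

theorem theorem6p1:
  fixes d :: nat and N :: "nat \<Rightarrow> int" and p :: "nat \<Rightarrow> nat" and T :: "ent set"
  assumes "d \<ge> 2"
    and "\<forall>k<d. N k \<ge> 1"
    and "T \<in> meshes d N p"
  shows "AAS d N p T \<longleftrightarrow> SDC d N p T"
  using AAS_imp_SDC SDC_imp_AAS assms(2,3) by blast

end
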